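(* Let $n,d \ge 1$. A general form $p \in H_d(\mathbb{C}^n)$ is a sum of $N(n,d-1) = \binom{n+d-2}{d-1}$ $d$-th powers of linear forms.
   Context: $H_d(\mathbb{C}^n)$ denotes the complex vector space of homogeneous polynomials of degree $d$ in $n$ variables. Its dimension is $N(n,d)=\binom{n+d-1}{d}$. "A general $p$ has property P" means P holds for all $p$ in a nonempty Zariski-open subset of $H_d(\mathbb{C}^n)$. *)

theory Defs
  imports Complex_Main
begin

definition monoms :: "nat \<Rightarrow> nat \<Rightarrow> (nat \<Rightarrow> nat) set" where
  "monoms n d = {\<alpha>. (\<forall>i\<ge>n. \<alpha> i = 0) \<and> (\<Sum>i<n. \<alpha> i) = d}"

text \<open>H_d(C^n): a form is given by its coefficient family, supported on monoms n d.\<close>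
definition forms :: "nat \<Rightarrow> nat \<Rightarrow> ((nat \<Rightarrow> nat) \<Rightarrow> complex) set" where
  "forms n d = {p. \<forall>\<alpha>. \<alpha> \<notin> monoms n d \<longrightarrow> p \<alpha> = 0}"

definition eval_form :: "nat \<Rightarrow> nat \<Rightarrow> ((nat \<Rightarrow> nat) \<Rightarrow> complex) \<Rightarrow> (nat \<Rightarrow> complex) \<Rightarrow> complex" where
  "eval_form n d p x = (\<Sum>\<alpha>\<in>monoms n d. p \<alpha> * (\<Prod>i<n. x i ^ \<alpha> i))"

definition sum_of_powers :: "nat \<Rightarrow> nat \<Rightarrow> nat \<Rightarrow> ((nat \<Rightarrow> nat) \<Rightarrow> complex) \<Rightarrow> bool" where
  "sum_of_powers n d r p \<longleftrightarrow> (\<exists>l :: nat \<Rightarrow> nat \<Rightarrow> complex.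
      \<forall>x. eval_form n d p x = (\<Sum>j<r. (\<Sum>i<n. l j i * x i) ^ d))"

inductive coeff_poly :: "(nat \<Rightarrow> nat) set \<Rightarrow> (((nat \<Rightarrow> nat) \<Rightarrow> complex) \<Rightarrow> complex) \<Rightarrow> bool"
  for M where
  const: "coeff_poly M (\<lambda>p. c)"
| coord: "\<alpha> \<in> M \<Longrightarrow> coeff_poly M (\<lambda>p. p \<alpha>)"
| add: "coeff_poly M f \<Longrightarrow> coeff_poly M g \<Longrightarrow> coeff_poly M (\<lambda>p. f p + g p)"
| mult: "coeff_poly M f \<Longrightarrow> coeff_poly M g \<Longrightarrow> coeff_poly M (\<lambda>p. f p * g p)"

text \<open>Zariski-open subsets of H_d(C^n): complements of common zero sets of polynomials.\<close>
definition zariski_open_forms :: "nat \<Rightarrow> nat \<Rightarrow> ((nat \<Rightarrow> nat) \<Rightarrow> complex) set \<Rightarrow> bool" where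
  "zariski_open_forms n d U \<longleftrightarrow> (\<exists>S. (\<forall>f\<in>S. coeff_poly (monoms n d) f) \<and>
      U = {p \<in> forms n d. \<exists>f\<in>S. f p \<noteq> 0})"

definition general_form :: "nat \<Rightarrow> nat \<Rightarrow> (((nat \<Rightarrow> nat) \<Rightarrow> complex) \<Rightarrow> bool) \<Rightarrow> bool" where
  "general_form n d P \<longleftrightarrow> (\<exists>U. zariski_open_forms n d U \<and> U \<noteq> {} \<and> (\<forall>p\<in>U. P p))"

end

(*
  Let D_c = d/dx_(n-1) + c d/dx_0. For a form p of degree d = e + 1 in n >= 2 variables,
  D_d p has degree e, so by induction it is a combination of N(n, e - 1) powers (a_j . x)^e.
  Since D_d (a . x)^d = d (a_(n-1) + d a_0) (a . x)^e, suitable multiples P of the powers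
  (a_j . x)^d satisfy D_d P = D_d p. A form in the kernel of D_d is determined by its
  restriction to x_(n-1) = 0, a form of degree d in n - 1 variables; by induction the restriction
  of p - P is a combination of N(n - 1, d - 1) powers (b_k . x)^d, and replacing b_(k,n-1) by
  -d b_(k,0) moves these powers into the kernel of D_d without changing their restriction.
  Pascal's rule N(n, d - 1) = N(n, d - 2) + N(n - 1, d - 1) gives the count.

  All coefficients produced are rational functions of the coefficients of p, defined wherever a
  polynomial Delta that does not vanish identically is nonzero; that set is the Zariski-open set.
  The divisions require a_(n-1) + e a_0 <> 0 at all later degrees e, which for the lifted forms
  reads (e - d) b_(k,0) <> 0: this is why the step in degree d uses c = d.
*)

theory Submission
  imports Defs
begin

type_synonym coeffs = "(nat \<Rightarrow> nat) \<Rightarrow> complex"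

section \<open>Monomials\<close>

lemma finite_monoms: "finite (monoms n d)"
proof -
  have "monoms n d \<subseteq> {\<alpha>. \<forall>i. (i \<in> {..<n} \<longrightarrow> \<alpha> i \<in> {..d}) \<and> (i \<notin> {..<n} \<longrightarrow> \<alpha> i = 0)}"
  proof
    fix \<alpha> assume \<alpha>: "\<alpha> \<in> monoms n d"
    have "\<alpha> i \<le> d" if "i < n" for i
    proof -
      have "\<alpha> i \<le> (\<Sum>i<n. \<alpha> i)" using that by (intro member_le_sum) auto
      then show ?thesis using \<alpha> by (simp add: monoms_def)
    qed
    then show "\<alpha> \<in> {\<alpha>. \<forall>i. (i \<in> {..<n} \<longrightarrow> \<alpha> i \<in> {..d}) \<and> (i \<notin> {..<n} \<longrightarrow> \<alpha> i = 0)}"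
      using \<alpha> by (auto simp: monoms_def)
  qed
  then show ?thesis by (rule finite_subset) (intro finite_set_of_finite_funs; simp)
qed

lemma monoms_0: "monoms n 0 = {\<lambda>_. 0}"
proof -
  have "\<alpha> = (\<lambda>_. 0)" if "\<alpha> \<in> monoms n 0" for \<alpha>
    using that by (auto simp: monoms_def fun_eq_iff) (meson not_le lessThan_iff)
  then show ?thesis by (auto simp: monoms_def)
qed

lemma monoms_one_var: "monoms (Suc 0) d = {\<lambda>i. if i = 0 then d else 0}"
  by (auto simp: monoms_def fun_eq_iff)

definition unit_exp :: "nat \<Rightarrow> nat \<Rightarrow> nat" where
  "unit_exp i = (\<lambda>j. if j = i then 1 else 0)"

lemma monoms_Suc_0: "monoms n (Suc 0) = unit_exp ` {..<n}"
proof
  show "monoms n (Suc 0) \<subseteq> unit_exp ` {..<n}"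
  proof
    fix \<alpha> assume \<alpha>: "\<alpha> \<in> monoms n (Suc 0)"
    then obtain i where i: "i < n" "\<alpha> i = 1" "\<forall>j<n. j \<noteq> i \<longrightarrow> \<alpha> j = 0"
      unfolding monoms_def using sum_eq_Suc0_iff[of "{..<n}" \<alpha>] by auto
    have "\<alpha> = unit_exp i"
      using i \<alpha> by (auto simp: unit_exp_def monoms_def fun_eq_iff) (metis not_less)
    then show "\<alpha> \<in> unit_exp ` {..<n}" using i by auto
  qed
  show "unit_exp ` {..<n} \<subseteq> monoms n (Suc 0)"
  proof
    fix \<alpha> assume "\<alpha> \<in> unit_exp ` {..<n}"
    then obtain i where i: "i < n" "\<alpha> = unit_exp i" by auto
    have "(\<Sum>j<n. unit_exp i j) = (\<Sum>j\<in>{i}. unit_exp i j)"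
      by (rule sum.mono_neutral_right) (auto simp: unit_exp_def i)
    then show "\<alpha> \<in> monoms n (Suc 0)" using i by (auto simp: monoms_def unit_exp_def)
  qed
qed

lemma sum_fun_upd:
  fixes \<alpha> :: "'a \<Rightarrow> nat"
  assumes "finite A" "i \<in> A"
  shows "(\<Sum>j\<in>A. (\<alpha>(i := x)) j) + \<alpha> i = (\<Sum>j\<in>A. \<alpha> j) + x"
proof -
  have "(\<Sum>j\<in>A - {i}. (\<alpha>(i := x)) j) = (\<Sum>j\<in>A - {i}. \<alpha> j)" by (rule sum.cong) auto
  then show ?thesis using assms by (simp add: sum.remove)
qed

lemma monoms_inc: "\<alpha> \<in> monoms n d \<Longrightarrow> i < n \<Longrightarrow> \<alpha>(i := Suc (\<alpha> i)) \<in> monoms n (Suc d)"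
  unfolding monoms_def using sum_fun_upd[of "{..<n}" i \<alpha> "Suc (\<alpha> i)"] by auto

lemma monoms_dec: "\<beta> \<in> monoms n (Suc d) \<Longrightarrow> i < n \<Longrightarrow> 0 < \<beta> i \<Longrightarrow> \<beta>(i := \<beta> i - 1) \<in> monoms n d"
  unfolding monoms_def using sum_fun_upd[of "{..<n}" i \<beta> "\<beta> i - 1"] by auto

lemma monoms_pred:
  assumes "1 \<le> n"
  shows "monoms (n - 1) d = {\<alpha> \<in> monoms n d. \<alpha> (n - 1) = 0}"
proof -
  obtain m where m: "n = Suc m" using assms by (cases n) auto
  have "\<alpha> i = 0" if "\<alpha> \<in> monoms n d" "\<alpha> m = 0" "m \<le> i" for \<alpha> i
    using that by (cases "i = m") (auto simp: monoms_def m)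
  then show ?thesis by (auto simp: monoms_def m)
qed

lemma monoms_pred_subset: "monoms (n - 1) d \<subseteq> monoms n d"
  by (cases n) (auto simp: monoms_def)

section \<open>Rational functions of the coefficients\<close>

lemma coeff_poly_power: "coeff_poly M f \<Longrightarrow> coeff_poly M (\<lambda>p. f p ^ k)"
  by (induction k) (auto intro: coeff_poly.intros)

lemma coeff_poly_prod:
  "finite J \<Longrightarrow> (\<And>j. j \<in> J \<Longrightarrow> coeff_poly M (f j)) \<Longrightarrow> coeff_poly M (\<lambda>p. \<Prod>j\<in>J. f j p)"
  by (induction J rule: finite_induct) (auto intro: coeff_poly.intros)

definition rational_on :: "(nat \<Rightarrow> nat) set \<Rightarrow> (coeffs \<Rightarrow> complex) \<Rightarrow> (coeffs \<Rightarrow> complex) \<Rightarrow> bool" where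
  "rational_on M \<Delta> g \<longleftrightarrow> (\<exists>N k. coeff_poly M N \<and> (\<forall>p. \<Delta> p \<noteq> 0 \<longrightarrow> g p * \<Delta> p ^ k = N p))"

lemma rational_on_poly: "coeff_poly M g \<Longrightarrow> rational_on M \<Delta> g"
  unfolding rational_on_def by (rule exI[of _ g], rule exI[of _ 0]) simp

lemma rational_on_const: "rational_on M \<Delta> (\<lambda>p. c)"
  by (rule rational_on_poly) (rule coeff_poly.const)

lemma rational_on_coord: "\<alpha> \<in> M \<Longrightarrow> rational_on M \<Delta> (\<lambda>p. p \<alpha>)"
  by (rule rational_on_poly) (rule coeff_poly.coord)

lemma rational_on_cong:
  "rational_on M \<Delta> g \<Longrightarrow> (\<And>p. \<Delta> p \<noteq> 0 \<Longrightarrow> g p = g' p) \<Longrightarrow> rational_on M \<Delta> g'"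
  unfolding rational_on_def by metis

lemma rational_on_add:
  assumes "coeff_poly M \<Delta>" "rational_on M \<Delta> f" "rational_on M \<Delta> g"
  shows "rational_on M \<Delta> (\<lambda>p. f p + g p)"
proof -
  obtain Nf kf where Nf: "coeff_poly M Nf" "\<And>p. \<Delta> p \<noteq> 0 \<Longrightarrow> f p * \<Delta> p ^ kf = Nf p"
    using assms(2) unfolding rational_on_def by blast
  obtain Ng kg where Ng: "coeff_poly M Ng" "\<And>p. \<Delta> p \<noteq> 0 \<Longrightarrow> g p * \<Delta> p ^ kg = Ng p"
    using assms(3) unfolding rational_on_def by blast
  show ?thesis unfolding rational_on_def
  proof (intro exI[of _ "\<lambda>p. Nf p * \<Delta> p ^ kg + Ng p * \<Delta> p ^ kf"] exI[of _ "kf + kg"] conjI allI impI)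
    show "coeff_poly M (\<lambda>p. Nf p * \<Delta> p ^ kg + Ng p * \<Delta> p ^ kf)"
      using Nf(1) Ng(1) assms(1) by (intro coeff_poly.add coeff_poly.mult coeff_poly_power)
    fix p assume "\<Delta> p \<noteq> 0"
    have "(f p + g p) * \<Delta> p ^ (kf + kg) = (f p * \<Delta> p ^ kf) * \<Delta> p ^ kg + (g p * \<Delta> p ^ kg) * \<Delta> p ^ kf"
      by (simp add: power_add algebra_simps)
    then show "(f p + g p) * \<Delta> p ^ (kf + kg) = Nf p * \<Delta> p ^ kg + Ng p * \<Delta> p ^ kf"
      using Nf(2) Ng(2) \<open>\<Delta> p \<noteq> 0\<close> by simp
  qed
qed

lemma rational_on_mult:
  assumes "rational_on M \<Delta> f" "rational_on M \<Delta> g"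
  shows "rational_on M \<Delta> (\<lambda>p. f p * g p)"
proof -
  obtain Nf kf where Nf: "coeff_poly M Nf" "\<And>p. \<Delta> p \<noteq> 0 \<Longrightarrow> f p * \<Delta> p ^ kf = Nf p"
    using assms(1) unfolding rational_on_def by blast
  obtain Ng kg where Ng: "coeff_poly M Ng" "\<And>p. \<Delta> p \<noteq> 0 \<Longrightarrow> g p * \<Delta> p ^ kg = Ng p"
    using assms(2) unfolding rational_on_def by blast
  show ?thesis unfolding rational_on_def
  proof (intro exI[of _ "\<lambda>p. Nf p * Ng p"] exI[of _ "kf + kg"] conjI allI impI)
    show "coeff_poly M (\<lambda>p. Nf p * Ng p)" using Nf(1) Ng(1) by (rule coeff_poly.mult)
    fix p assume "\<Delta> p \<noteq> 0"
    have "f p * g p * \<Delta> p ^ (kf + kg) = (f p * \<Delta> p ^ kf) * (g p * \<Delta> p ^ kg)"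
      by (simp add: power_add algebra_simps)
    then show "f p * g p * \<Delta> p ^ (kf + kg) = Nf p * Ng p"
      using Nf(2) Ng(2) \<open>\<Delta> p \<noteq> 0\<close> by simp
  qed
qed

lemma rational_on_diff:
  assumes "coeff_poly M \<Delta>" "rational_on M \<Delta> f" "rational_on M \<Delta> g"
  shows "rational_on M \<Delta> (\<lambda>p. f p - g p)"
  using rational_on_add[OF assms(1,2) rational_on_mult[OF rational_on_const[of M \<Delta> "-1"] assms(3)]]
  by simp

lemma rational_on_power: "rational_on M \<Delta> f \<Longrightarrow> rational_on M \<Delta> (\<lambda>p. f p ^ k)"
  by (induction k) (auto intro: rational_on_mult rational_on_const)

lemma rational_on_sum:
  assumes "coeff_poly M \<Delta>" "finite J" "\<And>j. j \<in> J \<Longrightarrow> rational_on M \<Delta> (f j)"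
  shows "rational_on M \<Delta> (\<lambda>p. \<Sum>j\<in>J. f j p)"
  using assms(2,3)
  by (induction J rule: finite_induct) (auto intro: rational_on_add[OF assms(1)] rational_on_const)

lemma rational_on_prod:
  "finite J \<Longrightarrow> (\<And>j. j \<in> J \<Longrightarrow> rational_on M \<Delta> (f j)) \<Longrightarrow> rational_on M \<Delta> (\<lambda>p. \<Prod>j\<in>J. f j p)"
  by (induction J rule: finite_induct) (auto intro: rational_on_mult rational_on_const)

lemma rational_on_comp:
  assumes "coeff_poly M \<Delta>" "coeff_poly M' F" "\<And>\<beta>. \<beta> \<in> M' \<Longrightarrow> rational_on M \<Delta> (\<lambda>p. R p \<beta>)"
  shows "rational_on M \<Delta> (\<lambda>p. F (R p))"
  using assms(2,3)
  by (induction rule: coeff_poly.induct)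
     (auto intro: rational_on_add rational_on_mult rational_on_const assms(1))

lemma rational_on_mono:
  assumes "rational_on M \<Delta> g" "coeff_poly M E"
  shows "rational_on M (\<lambda>p. \<Delta> p * E p) g"
proof -
  obtain N k where N: "coeff_poly M N" "\<And>p. \<Delta> p \<noteq> 0 \<Longrightarrow> g p * \<Delta> p ^ k = N p"
    using assms(1) unfolding rational_on_def by blast
  show ?thesis unfolding rational_on_def
    by (rule exI[of _ "\<lambda>p. N p * E p ^ k"], rule exI[of _ k])
       (use N assms(2) in \<open>auto intro: coeff_poly.mult coeff_poly_power simp: power_mult_distrib\<close>)
qed

lemma rational_on_inverse:
  assumes "coeff_poly M \<Delta>" "rational_on M \<Delta> h"
  obtains \<Delta>' where "coeff_poly M \<Delta>'" "\<And>p. \<Delta>' p \<noteq> 0 \<longleftrightarrow> \<Delta> p \<noteq> 0 \<and> h p \<noteq> 0"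
    "\<And>g. rational_on M \<Delta> g \<Longrightarrow> rational_on M \<Delta>' g" "rational_on M \<Delta>' (\<lambda>p. inverse (h p))"
proof -
  obtain N k where N: "coeff_poly M N" "\<And>p. \<Delta> p \<noteq> 0 \<Longrightarrow> h p * \<Delta> p ^ k = N p"
    using assms(2) unfolding rational_on_def by blast
  show ?thesis
  proof (rule that[of "\<lambda>p. \<Delta> p * N p"])
    show "coeff_poly M (\<lambda>p. \<Delta> p * N p)" using assms(1) N(1) by (rule coeff_poly.mult)
    show "\<Delta> p * N p \<noteq> 0 \<longleftrightarrow> \<Delta> p \<noteq> 0 \<and> h p \<noteq> 0" for p
      using N(2)[of p] by auto
    show "rational_on M (\<lambda>p. \<Delta> p * N p) g" if "rational_on M \<Delta> g" for g
      using that N(1) by (rule rational_on_mono)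
    show "rational_on M (\<lambda>p. \<Delta> p * N p) (\<lambda>p. inverse (h p))"
      unfolding rational_on_def
    proof (intro exI[of _ "\<lambda>p. \<Delta> p ^ (k + k + 1) * N p ^ k"] exI[of _ "k + 1"] conjI allI impI)
      show "coeff_poly M (\<lambda>p. \<Delta> p ^ (k + k + 1) * N p ^ k)"
        using assms(1) N(1) by (intro coeff_poly.mult coeff_poly_power)
      fix p assume nz: "\<Delta> p * N p \<noteq> 0"
      then have hp: "h p = N p / \<Delta> p ^ k" using N(2)[of p] by (simp add: field_simps)
      show "inverse (h p) * (\<Delta> p * N p) ^ (k + 1) = \<Delta> p ^ (k + k + 1) * N p ^ k"
        unfolding hp using nz by (simp add: field_simps power_add power_mult_distrib)
    qed
  qed
qed

lemma rational_on_compose: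
  assumes "coeff_poly M \<Delta>" "coeff_poly M' \<Delta>'" "\<And>\<beta>. \<beta> \<in> M' \<Longrightarrow> rational_on M \<Delta> (\<lambda>p. R p \<beta>)"
  obtains \<Delta>'' where "coeff_poly M \<Delta>''" "\<And>p. \<Delta>'' p \<noteq> 0 \<longleftrightarrow> \<Delta> p \<noteq> 0 \<and> \<Delta>' (R p) \<noteq> 0"
    "\<And>g. rational_on M \<Delta> g \<Longrightarrow> rational_on M \<Delta>'' g"
    "\<And>h. rational_on M' \<Delta>' h \<Longrightarrow> rational_on M \<Delta>'' (\<lambda>p. h (R p))"
proof -
  have "rational_on M \<Delta> (\<lambda>p. \<Delta>' (R p))" by (rule rational_on_comp[OF assms])
  from rational_on_inverse[OF assms(1) this]
  obtain \<Delta>'' where \<Delta>'': "coeff_poly M \<Delta>''" "\<And>p. \<Delta>'' p \<noteq> 0 \<longleftrightarrow> \<Delta> p \<noteq> 0 \<and> \<Delta>' (R p) \<noteq> 0"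
    "\<And>g. rational_on M \<Delta> g \<Longrightarrow> rational_on M \<Delta>'' g" "rational_on M \<Delta>'' (\<lambda>p. inverse (\<Delta>' (R p)))"
    by blast
  show ?thesis
  proof (rule that[OF \<Delta>''(1-3)])
    fix h assume "rational_on M' \<Delta>' h"
    then obtain N k where N: "coeff_poly M' N" "\<And>r. \<Delta>' r \<noteq> 0 \<Longrightarrow> h r * \<Delta>' r ^ k = N r"
      unfolding rational_on_def by blast
    have "rational_on M \<Delta>'' (\<lambda>p. N (R p) * inverse (\<Delta>' (R p)) ^ k)"
      by (intro rational_on_mult rational_on_power \<Delta>''(3,4) rational_on_comp[OF assms(1) N(1) assms(3)])
    then show "rational_on M \<Delta>'' (\<lambda>p. h (R p))"
      by (rule rational_on_cong) (use N(2) \<Delta>''(2) in \<open>auto simp: field_simps power_inverse\<close>)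
  qed
qed

section \<open>Powers of linear forms\<close>

definition multinomial_coeff :: "nat \<Rightarrow> nat \<Rightarrow> (nat \<Rightarrow> nat) \<Rightarrow> complex" where
  "multinomial_coeff n d \<alpha> = fact d / (\<Prod>i<n. fact (\<alpha> i))"

definition power_form :: "nat \<Rightarrow> nat \<Rightarrow> (nat \<Rightarrow> complex) \<Rightarrow> coeffs" where
  "power_form n d a \<alpha> =
     (if \<alpha> \<in> monoms n d then multinomial_coeff n d \<alpha> * (\<Prod>i<n. a i ^ \<alpha> i) else 0)"

lemma prod_fun_upd:
  assumes "finite A" "i \<in> A"
  shows "(\<Prod>j\<in>A. F j ((\<beta>(i := x)) j)) = F i x * (\<Prod>j\<in>A - {i}. F j (\<beta> j))"
proof -
  have "(\<Prod>j\<in>A - {i}. F j ((\<beta>(i := x)) j)) = (\<Prod>j\<in>A - {i}. F j (\<beta> j))" by (rule prod.cong) auto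
  then show ?thesis using assms by (simp add: prod.remove)
qed

lemma prod_power_inc:
  fixes a :: "nat \<Rightarrow> 'a::comm_monoid_mult" and \<beta> :: "nat \<Rightarrow> nat"
  assumes "i < n"
  shows "(\<Prod>j<n. a j ^ (\<beta>(i := Suc (\<beta> i))) j) = a i * (\<Prod>j<n. a j ^ \<beta> j)"
proof -
  have "(\<Prod>j<n. a j ^ (\<beta>(i := Suc (\<beta> i))) j) = a i ^ Suc (\<beta> i) * (\<Prod>j\<in>{..<n} - {i}. a j ^ \<beta> j)"
    by (rule prod_fun_upd) (use assms in auto)
  also have "\<dots> = a i * (\<Prod>j<n. a j ^ \<beta> j)"
    using assms by (simp add: prod.remove[of "{..<n}" i "\<lambda>j. a j ^ \<beta> j"] mult_ac)
  finally show ?thesis .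
qed

lemma prod_fact_inc:
  fixes \<beta> :: "nat \<Rightarrow> nat"
  assumes "i < n"
  shows "(\<Prod>j<n. fact ((\<beta>(i := Suc (\<beta> i))) j)) = (of_nat (Suc (\<beta> i)) * (\<Prod>j<n. fact (\<beta> j)) :: complex)"
proof -
  have "(\<Prod>j<n. fact ((\<beta>(i := Suc (\<beta> i))) j)) = (fact (Suc (\<beta> i)) * (\<Prod>j\<in>{..<n} - {i}. fact (\<beta> j)) :: complex)"
    by (rule prod_fun_upd) (use assms in auto)
  also have "\<dots> = of_nat (Suc (\<beta> i)) * (\<Prod>j<n. fact (\<beta> j))"
    using assms by (simp add: prod.remove[of "{..<n}" i "\<lambda>j. fact (\<beta> j)"] mult_ac del: of_nat_Suc)
  finally show ?thesis .
qed

lemma multinomial_coeff_inc: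
  assumes "i < n"
  shows "of_nat (Suc (\<beta> i)) * multinomial_coeff n (Suc e) (\<beta>(i := Suc (\<beta> i)))
       = of_nat (Suc e) * multinomial_coeff n e \<beta>"
proof -
  have "(\<Prod>j<n. fact (\<beta> j) :: complex) \<noteq> 0" by (simp add: prod_zero_iff)
  then show ?thesis
    unfolding multinomial_coeff_def prod_fact_inc[OF assms] by (simp del: of_nat_Suc)
qed

lemma sum_multinomial_coeff_dec:
  assumes "\<beta> \<in> monoms n (Suc d)"
  shows "(\<Sum>i | i < n \<and> 0 < \<beta> i. multinomial_coeff n d (\<beta>(i := \<beta> i - 1))) = multinomial_coeff n (Suc d) \<beta>"
proof -
  have dec: "multinomial_coeff n d (\<beta>(i := \<beta> i - 1)) = of_nat (\<beta> i) * multinomial_coeff n (Suc d) \<beta> / of_nat (Suc d)"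
    if "i < n" "0 < \<beta> i" for i
  proof -
    define \<gamma> where "\<gamma> = \<beta>(i := \<beta> i - 1)"
    have \<gamma>: "\<gamma>(i := \<beta> i) = \<beta>" "Suc (\<gamma> i) = \<beta> i" using that by (auto simp: \<gamma>_def)
    have "of_nat (Suc (\<gamma> i)) * multinomial_coeff n (Suc d) (\<gamma>(i := Suc (\<gamma> i)))
        = of_nat (Suc d) * multinomial_coeff n d \<gamma>"
      by (rule multinomial_coeff_inc[OF that(1)])
    then have "of_nat (\<beta> i) * multinomial_coeff n (Suc d) \<beta> = of_nat (Suc d) * multinomial_coeff n d \<gamma>"
      unfolding \<gamma> .
    then show ?thesis unfolding \<gamma>_def[symmetric] by (simp add: field_simps del: of_nat_Suc)
  qed
  have "(\<Sum>i | i < n \<and> 0 < \<beta> i. multinomial_coeff n d (\<beta>(i := \<beta> i - 1)))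
      = (\<Sum>i | i < n \<and> 0 < \<beta> i. of_nat (\<beta> i) * multinomial_coeff n (Suc d) \<beta> / of_nat (Suc d))"
    by (rule sum.cong) (auto simp: dec[simplified])
  also have "\<dots> = (\<Sum>i<n. of_nat (\<beta> i) * multinomial_coeff n (Suc d) \<beta> / of_nat (Suc d))"
    by (rule sum.mono_neutral_left) auto
  also have "\<dots> = of_nat (\<Sum>i<n. \<beta> i) * multinomial_coeff n (Suc d) \<beta> / of_nat (Suc d)"
    by (simp add: sum_divide_distrib sum_distrib_right)
  also have "\<dots> = multinomial_coeff n (Suc d) \<beta>"
    using assms by (simp add: monoms_def del: of_nat_Suc)
  finally show ?thesis .
qed

lemma sum_monoms_inc:
  "(\<Sum>(\<alpha>, i)\<in>monoms n d \<times> {..<n}. f (\<alpha>(i := Suc (\<alpha> i))) i)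
     = (\<Sum>\<beta>\<in>monoms n (Suc d). \<Sum>i | i < n \<and> 0 < \<beta> i. f \<beta> i)"
proof -
  have "(\<Sum>(\<alpha>, i)\<in>monoms n d \<times> {..<n}. f (\<alpha>(i := Suc (\<alpha> i))) i)
      = (\<Sum>(\<beta>, i)\<in>Sigma (monoms n (Suc d)) (\<lambda>\<beta>. {i. i < n \<and> 0 < \<beta> i}). f \<beta> i)"
    by (rule sum.reindex_bij_witness[where i = "\<lambda>(\<beta>, i). (\<beta>(i := \<beta> i - 1), i)"
          and j = "\<lambda>(\<alpha>, i). (\<alpha>(i := Suc (\<alpha> i)), i)"]) (auto intro: monoms_inc monoms_dec[simplified])
  also have "\<dots> = (\<Sum>\<beta>\<in>monoms n (Suc d). \<Sum>i | i < n \<and> 0 < \<beta> i. f \<beta> i)"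
    by (rule sum.Sigma[symmetric]) (auto simp: finite_monoms)
  finally show ?thesis .
qed

theorem multinomial:
  fixes y :: "nat \<Rightarrow> complex"
  shows "(\<Sum>i<n. y i) ^ d = (\<Sum>\<alpha>\<in>monoms n d. multinomial_coeff n d \<alpha> * (\<Prod>i<n. y i ^ \<alpha> i))"
proof (induction d)
  case 0
  then show ?case by (simp add: monoms_0 multinomial_coeff_def)
next
  case (Suc d)
  define f where "f \<beta> i = multinomial_coeff n d (\<beta>(i := \<beta> i - 1)) * (\<Prod>j<n. y j ^ \<beta> j)" for \<beta> i
  have "(\<Sum>i<n. y i) ^ Suc d
      = (\<Sum>\<alpha>\<in>monoms n d. multinomial_coeff n d \<alpha> * (\<Prod>j<n. y j ^ \<alpha> j)) * (\<Sum>i<n. y i)"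
    by (simp only: power_Suc2 Suc.IH)
  also have "\<dots> = (\<Sum>(\<alpha>, i)\<in>monoms n d \<times> {..<n}. multinomial_coeff n d \<alpha> * (\<Prod>j<n. y j ^ \<alpha> j) * y i)"
    by (simp add: sum_product sum.cartesian_product)
  also have "\<dots> = (\<Sum>(\<alpha>, i)\<in>monoms n d \<times> {..<n}. f (\<alpha>(i := Suc (\<alpha> i))) i)"
  proof -
    have "f (\<alpha>(i := Suc (\<alpha> i))) i = multinomial_coeff n d \<alpha> * (\<Prod>j<n. y j ^ \<alpha> j) * y i" if "i < n" for \<alpha> i
      unfolding f_def prod_power_inc[OF that] by (simp add: mult_ac)
    then show ?thesis by (intro sum.cong) auto
  qed
  also have "\<dots> = (\<Sum>\<beta>\<in>monoms n (Suc d). \<Sum>i | i < n \<and> 0 < \<beta> i. f \<beta> i)"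
    by (rule sum_monoms_inc)
  also have "\<dots> = (\<Sum>\<beta>\<in>monoms n (Suc d). multinomial_coeff n (Suc d) \<beta> * (\<Prod>j<n. y j ^ \<beta> j))"
    by (intro sum.cong)
       (simp_all add: f_def sum_distrib_right[symmetric] sum_multinomial_coeff_dec[simplified])
  finally show ?case .
qed

lemma eval_power_form: "eval_form n d (power_form n d a) x = (\<Sum>i<n. a i * x i) ^ d"
  unfolding multinomial eval_form_def
  by (intro sum.cong) (simp_all add: power_form_def power_mult_distrib prod.distrib mult_ac)

lemma power_form_inc:
  assumes "\<beta> \<in> monoms n e" "i < n"
  shows "of_nat (Suc (\<beta> i)) * power_form n (Suc e) a (\<beta>(i := Suc (\<beta> i)))
       = of_nat (Suc e) * a i * power_form n e a \<beta>"
proof -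
  have "of_nat (Suc (\<beta> i)) * power_form n (Suc e) a (\<beta>(i := Suc (\<beta> i)))
      = (of_nat (Suc (\<beta> i)) * multinomial_coeff n (Suc e) (\<beta>(i := Suc (\<beta> i)))) * (a i * (\<Prod>j<n. a j ^ \<beta> j))"
    unfolding power_form_def prod_power_inc[OF assms(2)] using monoms_inc[OF assms]
    by (simp only: if_True mult.assoc)
  then show ?thesis
    unfolding multinomial_coeff_inc[OF assms(2)] using assms(1) by (simp add: power_form_def mult_ac)
qed

lemma power_form_restrict:
  assumes "\<alpha> \<in> monoms (n - 1) d" "\<And>i. i < n - 1 \<Longrightarrow> b i = a i"
  shows "power_form n d b \<alpha> = power_form (n - 1) d a \<alpha>"
proof (cases n)
  case (Suc m)
  have "\<alpha> m = 0" using assms(1) by (simp add: monoms_def Suc)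
  moreover have "(\<Prod>i<m. b i ^ \<alpha> i) = (\<Prod>i<m. a i ^ \<alpha> i)"
    using assms(2) by (simp add: Suc)
  ultimately show ?thesis
    using assms(1) monoms_pred_subset[of n d] by (auto simp: power_form_def multinomial_coeff_def Suc)
qed (use assms in \<open>simp add: power_form_def multinomial_coeff_def\<close>)

section \<open>A directional derivative\<close>

text \<open>The coefficients of \<open>(\<partial>/\<partial>x\<^sub>n\<^sub>-\<^sub>1 + c \<partial>/\<partial>x\<^sub>0) p\<close> for a form p of degree \<open>e + 1\<close>.\<close>

definition dir_deriv :: "nat \<Rightarrow> nat \<Rightarrow> nat \<Rightarrow> coeffs \<Rightarrow> coeffs" where
  "dir_deriv n c e p \<beta> =
     (if \<beta> \<in> monoms n e
      then of_nat (Suc (\<beta> (n - 1))) * p (\<beta>(n - 1 := Suc (\<beta> (n - 1))))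
         + of_nat c * of_nat (Suc (\<beta> 0)) * p (\<beta>(0 := Suc (\<beta> 0)))
      else 0)"

lemma dir_deriv_in_forms: "dir_deriv n c e p \<in> forms n e"
  by (simp add: forms_def dir_deriv_def)

lemma coeff_poly_dir_deriv:
  assumes "1 \<le> n"
  shows "coeff_poly (monoms n (Suc e)) (\<lambda>p. dir_deriv n c e p \<beta>)"
proof (cases "\<beta> \<in> monoms n e")
  case True
  then have "\<beta>(n - 1 := Suc (\<beta> (n - 1))) \<in> monoms n (Suc e)" "\<beta>(0 := Suc (\<beta> 0)) \<in> monoms n (Suc e)"
    using assms by (auto intro: monoms_inc)
  then show ?thesis
    unfolding dir_deriv_def using True
    by (simp, intro coeff_poly.add coeff_poly.mult coeff_poly.const coeff_poly.coord)
qed (simp add: dir_deriv_def coeff_poly.const)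

lemma dir_deriv_cong:
  assumes "1 \<le> n" "\<And>\<alpha>. \<alpha> \<in> monoms n (Suc e) \<Longrightarrow> f \<alpha> = g \<alpha>"
  shows "dir_deriv n c e f = dir_deriv n c e g"
proof
  fix \<beta>
  show "dir_deriv n c e f \<beta> = dir_deriv n c e g \<beta>"
  proof (cases "\<beta> \<in> monoms n e")
    case True
    then have "\<beta>(n - 1 := Suc (\<beta> (n - 1))) \<in> monoms n (Suc e)" "\<beta>(0 := Suc (\<beta> 0)) \<in> monoms n (Suc e)"
      using assms(1) by (auto intro: monoms_inc)
    then show ?thesis unfolding dir_deriv_def using assms(2) by simp
  qed (simp add: dir_deriv_def)
qed

lemma dir_deriv_add: "dir_deriv n c e (\<lambda>\<alpha>. f \<alpha> + g \<alpha>) \<beta> = dir_deriv n c e f \<beta> + dir_deriv n c e g \<beta>"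
  by (simp add: dir_deriv_def algebra_simps)

lemma dir_deriv_diff: "dir_deriv n c e (\<lambda>\<alpha>. f \<alpha> - g \<alpha>) \<beta> = dir_deriv n c e f \<beta> - dir_deriv n c e g \<beta>"
  by (simp add: dir_deriv_def algebra_simps)

lemma dir_deriv_lincomb:
  "dir_deriv n c e (\<lambda>\<alpha>. \<Sum>j<N. C j * f j \<alpha>) \<beta> = (\<Sum>j<N. C j * dir_deriv n c e (f j) \<beta>)"
  by (simp add: dir_deriv_def sum.distrib sum_distrib_left algebra_simps)

lemma dir_deriv_power_form:
  assumes "1 \<le> n"
  shows "dir_deriv n c e (power_form n (Suc e) a) \<beta>
       = of_nat (Suc e) * (a (n - 1) + of_nat c * a 0) * power_form n e a \<beta>"
proof (cases "\<beta> \<in> monoms n e")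
  case True
  then show ?thesis
    using power_form_inc[OF True, of "n - 1" a] power_form_inc[OF True, of 0 a] assms
    by (simp add: dir_deriv_def algebra_simps del: of_nat_Suc)
qed (simp add: dir_deriv_def power_form_def)

text \<open>Induction on the exponent of \<open>x\<^sub>n\<^sub>-\<^sub>1\<close>: the coefficient of g at \<alpha> is read off
  \<open>dir_deriv g\<close> at \<open>\<alpha> - e\<^sub>n\<^sub>-\<^sub>1\<close>, where it is paired with a coefficient of lower exponent.\<close>

lemma dir_deriv_restriction_zero:
  assumes n: "2 \<le> n"
    and deriv: "\<And>\<beta>. \<beta> \<in> monoms n e \<Longrightarrow> dir_deriv n c e g \<beta> = 0"
    and restr: "\<And>\<alpha>. \<alpha> \<in> monoms (n - 1) (Suc e) \<Longrightarrow> g \<alpha> = 0"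
    and \<alpha>: "\<alpha> \<in> monoms n (Suc e)"
  shows "g \<alpha> = 0"
proof -
  have "\<forall>\<alpha>\<in>monoms n (Suc e). \<alpha> (n - 1) = k \<longrightarrow> g \<alpha> = 0" for k
  proof (induction k rule: less_induct)
    case (less k)
    show ?case
    proof (intro ballI impI)
      fix \<alpha> assume \<alpha>: "\<alpha> \<in> monoms n (Suc e)" and k: "\<alpha> (n - 1) = k"
      show "g \<alpha> = 0"
      proof (cases k)
        case 0
        then have "\<alpha> \<in> monoms (n - 1) (Suc e)" using \<alpha> k n monoms_pred[of n "Suc e"] by auto
        then show ?thesis by (rule restr)
      next
        case (Suc k')
        define \<beta> where "\<beta> = \<alpha>(n - 1 := k')"
        have \<beta>: "\<beta> \<in> monoms n e" using monoms_dec[OF \<alpha>, of "n - 1"] n k Suc by (simp add: \<beta>_def)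
        have "\<beta>(n - 1 := Suc (\<beta> (n - 1))) = \<alpha>" using k Suc by (auto simp: \<beta>_def)
        moreover have "g (\<beta>(0 := Suc (\<beta> 0))) = 0"
          using less[of k'] monoms_inc[OF \<beta>, of 0] n Suc by (simp add: \<beta>_def)
        ultimately have "of_nat (Suc k') * g \<alpha> = 0"
          using deriv[OF \<beta>] \<beta> by (simp add: dir_deriv_def \<beta>_def)
        then show ?thesis by (simp only: mult_eq_0_iff of_nat_eq_0_iff Suc_not_Zero simp_thms)
      qed
    qed
  qed
  then show ?thesis using \<alpha> by blast
qed

section \<open>Sums of powers\<close>

definition power_sum ::
  "nat \<Rightarrow> nat \<Rightarrow> nat \<Rightarrow> (nat \<Rightarrow> complex) \<Rightarrow> (nat \<Rightarrow> nat \<Rightarrow> complex) \<Rightarrow> coeffs" where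
  "power_sum n d N C A \<alpha> = (\<Sum>j<N. C j * power_form n d (A j) \<alpha>)"

definition seq_join :: "nat \<Rightarrow> (nat \<Rightarrow> 'a) \<Rightarrow> (nat \<Rightarrow> 'a) \<Rightarrow> nat \<Rightarrow> 'a" where
  "seq_join N f g j = (if j < N then f j else g (j - N))"

lemma power_sum_seq_join:
  "power_sum n d (N + N') (seq_join N C C') (seq_join N A A') \<alpha>
     = power_sum n d N C A \<alpha> + power_sum n d N' C' A' \<alpha>"
  by (induction N') (simp_all add: power_sum_def seq_join_def)

lemma power_sum_outside: "\<alpha> \<notin> monoms n d \<Longrightarrow> power_sum n d N C A \<alpha> = 0"
  by (simp add: power_sum_def power_form_def)

lemma eval_power_sum:
  "eval_form n d (power_sum n d N C A) x = (\<Sum>j<N. C j * (\<Sum>i<n. A j i * x i) ^ d)"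
proof -
  have "eval_form n d (power_sum n d N C A) x = (\<Sum>j<N. C j * eval_form n d (power_form n d (A j)) x)"
    by (simp add: eval_form_def power_sum_def sum_distrib_left sum_distrib_right mult.assoc
        sum.swap[of _ "monoms n d"])
  then show ?thesis by (simp add: eval_power_form)
qed

lemma dir_deriv_power_sum:
  assumes "1 \<le> n"
  shows "dir_deriv n c e (power_sum n (Suc e) N C A)
       = power_sum n e N (\<lambda>j. of_nat (Suc e) * (A j (n - 1) + of_nat c * A j 0) * C j) A"
  using assms
  by (simp add: fun_eq_iff power_sum_def[abs_def] dir_deriv_lincomb dir_deriv_power_form mult_ac)

lemma rational_on_power_form:
  assumes "\<And>i. rational_on M \<Delta> (\<lambda>p. A p i)"
  shows "rational_on M \<Delta> (\<lambda>p. power_form n d (A p) \<alpha>)"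
  by (cases "\<alpha> \<in> monoms n d")
     (simp_all add: power_form_def rational_on_const rational_on_mult rational_on_prod rational_on_power assms)

lemma rational_on_power_sum:
  assumes "coeff_poly M \<Delta>" "\<And>j. j < N \<Longrightarrow> rational_on M \<Delta> (\<lambda>p. C p j)"
    "\<And>j i. j < N \<Longrightarrow> rational_on M \<Delta> (\<lambda>p. A p j i)"
  shows "rational_on M \<Delta> (\<lambda>p. power_sum n d N (C p) (A p) \<alpha>)"
  unfolding power_sum_def
  by (auto intro!: rational_on_sum assms rational_on_mult rational_on_power_form)

text \<open>\<open>dir_deriv n d (d - 1)\<close> maps the d-th power of a linear form a to \<open>lift_factor n d a\<close>
  times its \<open>(d - 1)\<close>-st power.\<close>

definition lift_factor :: "nat \<Rightarrow> nat \<Rightarrow> (nat \<Rightarrow> complex) \<Rightarrow> complex" where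
  "lift_factor n d a = of_nat d * (a (n - 1) + of_nat d * a 0)"

definition lift_coeffs :: "nat \<Rightarrow> nat \<Rightarrow> (nat \<Rightarrow> complex) \<Rightarrow> (nat \<Rightarrow> nat \<Rightarrow> complex) \<Rightarrow> nat \<Rightarrow> complex" where
  "lift_coeffs n d C A j = C j / lift_factor n d (A j)"

lemma dir_deriv_lift:
  assumes "1 \<le> n" "\<And>j. j < N \<Longrightarrow> lift_factor n (Suc e) (A j) \<noteq> 0"
  shows "dir_deriv n (Suc e) e (power_sum n (Suc e) N (lift_coeffs n (Suc e) C A) A) = power_sum n e N C A"
proof -
  have "of_nat (Suc e) * (A j (n - 1) + of_nat (Suc e) * A j 0) * lift_coeffs n (Suc e) C A j = C j"
    if "j < N" for j
    using assms(2)[OF that] by (simp add: lift_coeffs_def lift_factor_def del: of_nat_Suc)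
  then show ?thesis
    unfolding dir_deriv_power_sum[OF assms(1)] unfolding power_sum_def by (auto intro!: sum.cong)
qed

definition kernel_lift :: "nat \<Rightarrow> nat \<Rightarrow> (nat \<Rightarrow> complex) \<Rightarrow> nat \<Rightarrow> complex" where
  "kernel_lift n c a = a(n - 1 := - of_nat c * a 0)"

lemma dir_deriv_kernel_lift:
  assumes "2 \<le> n"
  shows "dir_deriv n c e (power_sum n (Suc e) N C (\<lambda>j. kernel_lift n c (A j))) = (\<lambda>_. 0)"
  using assms by (simp add: dir_deriv_power_sum fun_eq_iff power_sum_def kernel_lift_def)

lemma power_sum_kernel_lift_restrict:
  "\<alpha> \<in> monoms (n - 1) d \<Longrightarrow> power_sum n d N C (\<lambda>j. kernel_lift n c (A j)) \<alpha> = power_sum (n - 1) d N C A \<alpha>"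
  unfolding power_sum_def by (intro sum.cong arg_cong2[where f = "(*)"] power_form_restrict refl)
    (auto simp: kernel_lift_def)

definition nondegenerate :: "nat \<Rightarrow> nat \<Rightarrow> nat \<Rightarrow> (nat \<Rightarrow> complex) \<Rightarrow> bool" where
  "nondegenerate n d D a \<longleftrightarrow> a 0 \<noteq> 0 \<and> (\<forall>e. d < e \<and> e \<le> D \<longrightarrow> a (n - 1) + of_nat e * a 0 \<noteq> 0)"

lemma nondegenerate_lift_factor: "nondegenerate n e D a \<Longrightarrow> e < d \<Longrightarrow> d \<le> D \<Longrightarrow> lift_factor n d a \<noteq> 0"
  by (simp add: nondegenerate_def lift_factor_def)

lemma nondegenerate_Suc: "nondegenerate n e D a \<Longrightarrow> nondegenerate n (Suc e) D a"
  by (simp add: nondegenerate_def)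

lemma nondegenerate_kernel_lift:
  assumes "2 \<le> n" "a 0 \<noteq> 0"
  shows "nondegenerate n d D (kernel_lift n d a)"
  unfolding nondegenerate_def
proof (intro conjI allI impI)
  show "kernel_lift n d a 0 \<noteq> 0" using assms by (simp add: kernel_lift_def)
  fix e assume "d < e \<and> e \<le> D"
  then have "(of_nat e - of_nat d) * a 0 \<noteq> (0 :: complex)" using assms(2) by simp
  moreover have "kernel_lift n d a (n - 1) + of_nat e * kernel_lift n d a 0 = (of_nat e - of_nat d) * a 0"
    using assms(1) by (simp add: kernel_lift_def algebra_simps)
  ultimately show "kernel_lift n d a (n - 1) + of_nat e * kernel_lift n d a 0 \<noteq> 0" by simp
qed

section \<open>Decompositions on a Zariski-open set\<close>

definition rank_bound :: "nat \<Rightarrow> nat \<Rightarrow> nat" where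
  "rank_bound n d = (n + d - 2) choose (d - 1)"

lemma rank_bound_Suc:
  assumes "2 \<le> n" "1 \<le> e"
  shows "rank_bound n (Suc e) = rank_bound n e + rank_bound (n - 1) (Suc e)"
proof -
  have "n + Suc e - 2 = Suc (n + e - 2)" "n - 1 + Suc e - 2 = n + e - 2" "e = Suc (e - 1)"
    using assms by auto
  then show ?thesis unfolding rank_bound_def by (metis binomial_Suc_Suc diff_Suc_1)
qed

definition power_decomp ::
  "nat \<Rightarrow> nat \<Rightarrow> nat \<Rightarrow> coeffs \<Rightarrow> (nat \<Rightarrow> complex) \<Rightarrow> (nat \<Rightarrow> nat \<Rightarrow> complex) \<Rightarrow> bool" where
  "power_decomp n d D p C A \<longleftrightarrow>
     (\<forall>\<alpha>\<in>monoms n d. p \<alpha> = power_sum n d (rank_bound n d) C A \<alpha>) \<and>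
     (\<forall>j<rank_bound n d. nondegenerate n d D (A j))"

definition residual ::
  "nat \<Rightarrow> nat \<Rightarrow> nat \<Rightarrow> (nat \<Rightarrow> complex) \<Rightarrow> (nat \<Rightarrow> nat \<Rightarrow> complex) \<Rightarrow> coeffs \<Rightarrow> coeffs" where
  "residual n e N C A p \<alpha> =
     (if \<alpha> \<in> monoms (n - 1) (Suc e)
      then p \<alpha> - power_sum n (Suc e) N (lift_coeffs n (Suc e) C A) A \<alpha> else 0)"

lemma residual_in_forms: "residual n e N C A p \<in> forms (n - 1) (Suc e)"
  by (simp add: forms_def residual_def)

lemma power_decomp_lift_factor:
  assumes "power_decomp n e D q C A" "Suc e \<le> D" "j < rank_bound n e"
  shows "lift_factor n (Suc e) (A j) \<noteq> 0"
  using assms nondegenerate_lift_factor[of n e D "A j" "Suc e"] by (simp add: power_decomp_def)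

lemma dir_deriv_lift_decomp:
  assumes "1 \<le> n" "power_decomp n e D q C A" "Suc e \<le> D"
  shows "dir_deriv n (Suc e) e (power_sum n (Suc e) (rank_bound n e) (lift_coeffs n (Suc e) C A) A)
       = power_sum n e (rank_bound n e) C A"
  using assms(1) power_decomp_lift_factor[OF assms(2,3)] by (rule dir_deriv_lift)

lemma power_decomp_step:
  assumes n: "2 \<le> n" and e: "1 \<le> e" "Suc e \<le> D"
    and q: "power_decomp n e D (dir_deriv n (Suc e) e p) Cq Aq"
    and r: "power_decomp (n - 1) (Suc e) D (residual n e (rank_bound n e) Cq Aq p) Cr Ar"
  shows "power_decomp n (Suc e) D p
           (seq_join (rank_bound n e) (lift_coeffs n (Suc e) Cq Aq) Cr)
           (seq_join (rank_bound n e) Aq (\<lambda>k. kernel_lift n (Suc e) (Ar k)))"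
proof -
  define N where "N = rank_bound n e"
  define N' where "N' = rank_bound (n - 1) (Suc e)"
  define P where "P = power_sum n (Suc e) N (lift_coeffs n (Suc e) Cq Aq) Aq"
  define L where "L = power_sum n (Suc e) N' Cr (\<lambda>k. kernel_lift n (Suc e) (Ar k))"
  have nondeg_q: "nondegenerate n e D (Aq j)" if "j < N" for j
    using q that by (simp add: power_decomp_def N_def)
  have nondeg_r: "nondegenerate (n - 1) (Suc e) D (Ar k)" if "k < N'" for k
    using r that by (simp add: power_decomp_def N'_def)
  have "dir_deriv n (Suc e) e P = power_sum n e N Cq Aq"
    unfolding P_def N_def using n e(2) q by (intro dir_deriv_lift_decomp) auto
  then have deriv: "dir_deriv n (Suc e) e (\<lambda>\<alpha>. p \<alpha> - P \<alpha> - L \<alpha>) \<beta> = 0" if "\<beta> \<in> monoms n e" for \<beta>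
    using q that n by (simp add: dir_deriv_diff L_def dir_deriv_kernel_lift power_decomp_def N_def)
  have restr: "p \<alpha> - P \<alpha> - L \<alpha> = 0" if "\<alpha> \<in> monoms (n - 1) (Suc e)" for \<alpha>
    using r that by (simp add: L_def power_sum_kernel_lift_restrict power_decomp_def residual_def
        P_def N_def N'_def)
  have "p \<alpha> - P \<alpha> - L \<alpha> = 0" if "\<alpha> \<in> monoms n (Suc e)" for \<alpha>
    using n deriv restr that by (rule dir_deriv_restriction_zero)
  then have "p \<alpha> = P \<alpha> + L \<alpha>" if "\<alpha> \<in> monoms n (Suc e)" for \<alpha>
    using that by (simp add: algebra_simps)
  moreover have "nondegenerate n (Suc e) D (seq_join N Aq (\<lambda>k. kernel_lift n (Suc e) (Ar k)) j)"
    if "j < N + N'" for j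
  proof (cases "j < N")
    case True
    then show ?thesis using nondeg_q nondegenerate_Suc by (simp add: seq_join_def)
  next
    case False
    then have "Ar (j - N) 0 \<noteq> 0" using nondeg_r[of "j - N"] that by (simp add: nondegenerate_def)
    then show ?thesis using False n by (simp add: seq_join_def nondegenerate_kernel_lift)
  qed
  ultimately show ?thesis
    unfolding power_decomp_def rank_bound_Suc[OF n e(1)] power_sum_seq_join
    by (simp add: P_def L_def N_def N'_def)
qed

lemma power_decomp_step_surj:
  assumes n: "2 \<le> n" and e: "Suc e \<le> D"
    and q: "q \<in> forms n e" "power_decomp n e D q Cq Aq"
    and s: "s \<in> forms (n - 1) (Suc e)" "power_decomp (n - 1) (Suc e) D s Cr Ar"
  obtains p where "p \<in> forms n (Suc e)" "dir_deriv n (Suc e) e p = q"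
    "residual n e (rank_bound n e) Cq Aq p = s"
proof -
  define N where "N = rank_bound n e"
  define P where "P = power_sum n (Suc e) N (lift_coeffs n (Suc e) Cq Aq) Aq"
  define L where "L = power_sum n (Suc e) (rank_bound (n - 1) (Suc e)) Cr (\<lambda>k. kernel_lift n (Suc e) (Ar k))"
  define p where "p \<alpha> = (if \<alpha> \<in> monoms n (Suc e) then P \<alpha> + L \<alpha> else 0)" for \<alpha>
  have "dir_deriv n (Suc e) e p = dir_deriv n (Suc e) e (\<lambda>\<alpha>. P \<alpha> + L \<alpha>)"
    using n by (intro dir_deriv_cong) (simp_all add: p_def)
  also have "\<dots> = power_sum n e N Cq Aq"
    using dir_deriv_lift_decomp[OF _ q(2) e] n
    by (simp add: fun_eq_iff dir_deriv_add P_def L_def N_def dir_deriv_kernel_lift)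
  also have "\<dots> = q"
  proof
    fix \<beta>
    show "power_sum n e N Cq Aq \<beta> = q \<beta>"
      using q by (cases "\<beta> \<in> monoms n e") (auto simp: power_decomp_def forms_def N_def power_sum_outside)
  qed
  finally have "dir_deriv n (Suc e) e p = q" .
  moreover have "residual n e N Cq Aq p = s"
    using s monoms_pred_subset[of n "Suc e"]
    by (auto simp: fun_eq_iff residual_def p_def P_def L_def power_sum_kernel_lift_restrict
        power_decomp_def forms_def)
  moreover have "p \<in> forms n (Suc e)" by (simp add: p_def forms_def)
  ultimately show ?thesis using that N_def by blast
qed

definition generic_power_decomp :: "nat \<Rightarrow> nat \<Rightarrow> nat \<Rightarrow> bool" where
  "generic_power_decomp n d D \<longleftrightarrow> (\<exists>\<Delta> C A.
     coeff_poly (monoms n d) \<Delta> \<and> (\<exists>p\<in>forms n d. \<Delta> p \<noteq> 0) \<and>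
     (\<forall>j<rank_bound n d. rational_on (monoms n d) \<Delta> (\<lambda>p. C p j) \<and>
                         (\<forall>i. rational_on (monoms n d) \<Delta> (\<lambda>p. A p j i))) \<and>
     (\<forall>p\<in>forms n d. \<Delta> p \<noteq> 0 \<longrightarrow> power_decomp n d D p (C p) (A p)))"

lemma rational_on_lift_coeffs:
  assumes "coeff_poly M \<Delta>" "\<And>j i. j < N \<Longrightarrow> rational_on M \<Delta> (\<lambda>p. A p j i)"
  obtains \<Delta>' where "coeff_poly M \<Delta>'"
    "\<And>p. \<Delta>' p \<noteq> 0 \<longleftrightarrow> \<Delta> p \<noteq> 0 \<and> (\<forall>j<N. lift_factor n d (A p j) \<noteq> 0)"
    "\<And>g. rational_on M \<Delta> g \<Longrightarrow> rational_on M \<Delta>' g"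
    "\<And>C j. rational_on M \<Delta> (\<lambda>p. C p j) \<Longrightarrow> j < N \<Longrightarrow> rational_on M \<Delta>' (\<lambda>p. lift_coeffs n d (C p) (A p) j)"
proof -
  define H where "H p = (\<Prod>j<N. lift_factor n d (A p j))" for p
  have "rational_on M \<Delta> H"
    unfolding H_def lift_factor_def
    by (intro rational_on_prod rational_on_mult rational_on_add[OF assms(1)] rational_on_const assms(2)) auto
  from rational_on_inverse[OF assms(1) this] obtain \<Delta>' where \<Delta>': "coeff_poly M \<Delta>'"
    "\<And>p. \<Delta>' p \<noteq> 0 \<longleftrightarrow> \<Delta> p \<noteq> 0 \<and> H p \<noteq> 0" "\<And>g. rational_on M \<Delta> g \<Longrightarrow> rational_on M \<Delta>' g"
    "rational_on M \<Delta>' (\<lambda>p. inverse (H p))"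
    by blast
  show ?thesis
  proof (rule that[OF \<Delta>'(1) _ \<Delta>'(3)])
    show "\<Delta>' p \<noteq> 0 \<longleftrightarrow> \<Delta> p \<noteq> 0 \<and> (\<forall>j<N. lift_factor n d (A p j) \<noteq> 0)" for p
      using \<Delta>'(2) by (auto simp: H_def)
    fix C j assume C: "rational_on M \<Delta> (\<lambda>p. C p j)" and j: "j < N"
    have rat: "rational_on M \<Delta>' (\<lambda>p. C p j * (\<Prod>i\<in>{..<N} - {j}. lift_factor n d (A p i)) * inverse (H p))"
      unfolding lift_factor_def
      by (intro rational_on_mult rational_on_prod \<Delta>'(3,4) C rational_on_add[OF assms(1)]
          rational_on_const assms(2)) auto
    have H: "H p = lift_factor n d (A p j) * (\<Prod>i\<in>{..<N} - {j}. lift_factor n d (A p i))" for p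
      unfolding H_def using j by (simp add: prod.remove)
    show "rational_on M \<Delta>' (\<lambda>p. lift_coeffs n d (C p) (A p) j)"
      using rat by (rule rational_on_cong) (use \<Delta>'(2) H in \<open>auto simp: lift_coeffs_def field_simps\<close>)
  qed
qed

lemma rational_on_kernel_lift:
  assumes "\<And>i. rational_on M \<Delta> (\<lambda>p. a p i)"
  shows "rational_on M \<Delta> (\<lambda>p. kernel_lift n c (a p) i)"
proof (cases "i = n - 1")
  case True
  have "rational_on M \<Delta> (\<lambda>p. - of_nat c * a p 0)" by (rule rational_on_mult[OF rational_on_const assms])
  then show ?thesis using True by (simp add: kernel_lift_def)
qed (simp add: kernel_lift_def assms)

lemma rational_on_residual:
  assumes n: "1 \<le> n"
    and q: "coeff_poly (monoms n e) \<Delta>q"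
      "\<And>j. j < N \<Longrightarrow> rational_on (monoms n e) \<Delta>q (\<lambda>q. Cq q j)"
      "\<And>j i. j < N \<Longrightarrow> rational_on (monoms n e) \<Delta>q (\<lambda>q. Aq q j i)"
  defines "Q \<equiv> dir_deriv n (Suc e) e"
  obtains \<Delta> where "coeff_poly (monoms n (Suc e)) \<Delta>"
    "\<And>p. \<Delta> p \<noteq> 0 \<longleftrightarrow> \<Delta>q (Q p) \<noteq> 0 \<and> (\<forall>j<N. lift_factor n (Suc e) (Aq (Q p) j) \<noteq> 0)"
    "\<And>j. j < N \<Longrightarrow> rational_on (monoms n (Suc e)) \<Delta> (\<lambda>p. lift_coeffs n (Suc e) (Cq (Q p)) (Aq (Q p)) j)"
    "\<And>j i. j < N \<Longrightarrow> rational_on (monoms n (Suc e)) \<Delta> (\<lambda>p. Aq (Q p) j i)"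
    "\<And>\<alpha>. rational_on (monoms n (Suc e)) \<Delta> (\<lambda>p. residual n e N (Cq (Q p)) (Aq (Q p)) p \<alpha>)"
proof -
  define M where "M = monoms n (Suc e)"
  have "rational_on M (\<lambda>_. 1) (\<lambda>p. Q p \<beta>)" if "\<beta> \<in> monoms n e" for \<beta>
    unfolding M_def Q_def using n by (intro rational_on_poly coeff_poly_dir_deriv)
  from rational_on_compose[where R = Q, OF coeff_poly.const q(1) this]
  obtain \<Delta>1 where \<Delta>1: "coeff_poly M \<Delta>1" "\<And>p. \<Delta>1 p \<noteq> 0 \<longleftrightarrow> (1::complex) \<noteq> 0 \<and> \<Delta>q (Q p) \<noteq> 0"
    "\<And>g. rational_on M (\<lambda>_. 1) g \<Longrightarrow> rational_on M \<Delta>1 g"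
    "\<And>h. rational_on (monoms n e) \<Delta>q h \<Longrightarrow> rational_on M \<Delta>1 (\<lambda>p. h (Q p))"
    by blast
  have Aq1: "rational_on M \<Delta>1 (\<lambda>p. Aq (Q p) j i)" if "j < N" for j i
    using \<Delta>1(4)[OF q(3)[OF that]] by simp
  from rational_on_lift_coeffs[where n = n and d = "Suc e" and A = "\<lambda>p. Aq (Q p)", OF \<Delta>1(1) Aq1]
  obtain \<Delta> where \<Delta>: "coeff_poly M \<Delta>"
    "\<And>p. \<Delta> p \<noteq> 0 \<longleftrightarrow> \<Delta>1 p \<noteq> 0 \<and> (\<forall>j<N. lift_factor n (Suc e) (Aq (Q p) j) \<noteq> 0)"
    "\<And>g. rational_on M \<Delta>1 g \<Longrightarrow> rational_on M \<Delta> g"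
    "\<And>C j. rational_on M \<Delta>1 (\<lambda>p. C p j) \<Longrightarrow> j < N
       \<Longrightarrow> rational_on M \<Delta> (\<lambda>p. lift_coeffs n (Suc e) (C p) (Aq (Q p)) j)"
    by blast
  have CL: "rational_on M \<Delta> (\<lambda>p. lift_coeffs n (Suc e) (Cq (Q p)) (Aq (Q p)) j)" if "j < N" for j
    using \<Delta>(4)[where C = "\<lambda>p. Cq (Q p)", OF \<Delta>1(4)[OF q(2)[OF that]] that] by simp
  have Aq: "rational_on M \<Delta> (\<lambda>p. Aq (Q p) j i)" if "j < N" for j i
    by (rule \<Delta>(3)[OF Aq1[OF that]])
  have "rational_on M \<Delta> (\<lambda>p. residual n e N (Cq (Q p)) (Aq (Q p)) p \<alpha>)" for \<alpha>
  proof (cases "\<alpha> \<in> monoms (n - 1) (Suc e)")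
    case True
    then have "rational_on M \<Delta> (\<lambda>p. p \<alpha>)"
      using monoms_pred_subset[of n "Suc e"] by (intro rational_on_coord) (auto simp: M_def)
    from rational_on_diff[OF \<Delta>(1) this rational_on_power_sum[OF \<Delta>(1) CL Aq]]
    show ?thesis using True by (simp add: residual_def)
  qed (simp add: residual_def rational_on_const)
  then show ?thesis using that \<Delta>(1,2) \<Delta>1(2) CL Aq unfolding M_def by simp
qed

lemma rational_on_step:
  assumes n: "1 \<le> n"
    and q: "coeff_poly (monoms n e) \<Delta>q"
      "\<And>j. j < N \<Longrightarrow> rational_on (monoms n e) \<Delta>q (\<lambda>q. Cq q j)"
      "\<And>j i. j < N \<Longrightarrow> rational_on (monoms n e) \<Delta>q (\<lambda>q. Aq q j i)"
    and r: "coeff_poly (monoms (n - 1) (Suc e)) \<Delta>r"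
      "\<And>k. k < N' \<Longrightarrow> rational_on (monoms (n - 1) (Suc e)) \<Delta>r (\<lambda>s. Cr s k)"
      "\<And>k i. k < N' \<Longrightarrow> rational_on (monoms (n - 1) (Suc e)) \<Delta>r (\<lambda>s. Ar s k i)"
  defines "Q \<equiv> dir_deriv n (Suc e) e"
    and "R \<equiv> \<lambda>p. residual n e N (Cq (dir_deriv n (Suc e) e p)) (Aq (dir_deriv n (Suc e) e p)) p"
  obtains \<Delta> where "coeff_poly (monoms n (Suc e)) \<Delta>"
    "\<And>p. \<Delta> p \<noteq> 0 \<longleftrightarrow> \<Delta>q (Q p) \<noteq> 0 \<and> (\<forall>j<N. lift_factor n (Suc e) (Aq (Q p) j) \<noteq> 0) \<and> \<Delta>r (R p) \<noteq> 0"
    "\<And>j. j < N + N' \<Longrightarrow> rational_on (monoms n (Suc e)) \<Delta>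
       (\<lambda>p. seq_join N (lift_coeffs n (Suc e) (Cq (Q p)) (Aq (Q p))) (Cr (R p)) j)"
    "\<And>j i. j < N + N' \<Longrightarrow> rational_on (monoms n (Suc e)) \<Delta>
       (\<lambda>p. seq_join N (Aq (Q p)) (\<lambda>k. kernel_lift n (Suc e) (Ar (R p) k)) j i)"
proof (rule rational_on_residual[OF n q])
  fix \<Delta>1 assume \<Delta>1: "coeff_poly (monoms n (Suc e)) \<Delta>1"
    "\<And>p. \<Delta>1 p \<noteq> 0 \<longleftrightarrow> \<Delta>q (dir_deriv n (Suc e) e p) \<noteq> 0
       \<and> (\<forall>j<N. lift_factor n (Suc e) (Aq (dir_deriv n (Suc e) e p) j) \<noteq> 0)"
    "\<And>j. j < N \<Longrightarrow> rational_on (monoms n (Suc e)) \<Delta>1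
       (\<lambda>p. lift_coeffs n (Suc e) (Cq (dir_deriv n (Suc e) e p)) (Aq (dir_deriv n (Suc e) e p)) j)"
    "\<And>j i. j < N \<Longrightarrow> rational_on (monoms n (Suc e)) \<Delta>1 (\<lambda>p. Aq (dir_deriv n (Suc e) e p) j i)"
    "\<And>\<alpha>. rational_on (monoms n (Suc e)) \<Delta>1
       (\<lambda>p. residual n e N (Cq (dir_deriv n (Suc e) e p)) (Aq (dir_deriv n (Suc e) e p)) p \<alpha>)"
  define M where "M = monoms n (Suc e)"
  note \<Delta>1 = \<Delta>1[folded Q_def M_def]
  have "rational_on M \<Delta>1 (\<lambda>p. R p \<beta>)" if "\<beta> \<in> monoms (n - 1) (Suc e)" for \<beta>
    using \<Delta>1(5) by (simp add: R_def Q_def)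
  from rational_on_compose[where R = R, OF \<Delta>1(1) r(1) this]
  obtain \<Delta> where \<Delta>: "coeff_poly M \<Delta>" "\<And>p. \<Delta> p \<noteq> 0 \<longleftrightarrow> \<Delta>1 p \<noteq> 0 \<and> \<Delta>r (R p) \<noteq> 0"
    "\<And>g. rational_on M \<Delta>1 g \<Longrightarrow> rational_on M \<Delta> g"
    "\<And>h. rational_on (monoms (n - 1) (Suc e)) \<Delta>r h \<Longrightarrow> rational_on M \<Delta> (\<lambda>p. h (R p))"
    by blast
  show thesis
  proof (rule that[OF \<Delta>(1)[unfolded M_def]])
    show "\<Delta> p \<noteq> 0 \<longleftrightarrow> \<Delta>q (Q p) \<noteq> 0 \<and> (\<forall>j<N. lift_factor n (Suc e) (Aq (Q p) j) \<noteq> 0) \<and> \<Delta>r (R p) \<noteq> 0"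
      for p using \<Delta>(2) \<Delta>1(2) by auto
    fix j assume j: "j < N + N'"
    show "rational_on (monoms n (Suc e)) \<Delta>
        (\<lambda>p. seq_join N (lift_coeffs n (Suc e) (Cq (Q p)) (Aq (Q p))) (Cr (R p)) j)"
      using j \<Delta>(3)[OF \<Delta>1(3)] \<Delta>(4)[OF r(2)]
      by (cases "j < N") (simp_all add: seq_join_def M_def)
    show "rational_on (monoms n (Suc e)) \<Delta>
        (\<lambda>p. seq_join N (Aq (Q p)) (\<lambda>k. kernel_lift n (Suc e) (Ar (R p) k)) j i)" for i
    proof (cases "j < N")
      case True
      then show ?thesis using \<Delta>(3)[OF \<Delta>1(4)] by (simp add: seq_join_def M_def)
    next
      case False
      then have "rational_on M \<Delta> (\<lambda>p. Ar (R p) (j - N) i')" for i'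
        using j by (intro \<Delta>(4) r(3)) simp
      from rational_on_kernel_lift[OF this] show ?thesis
        using False by (simp add: seq_join_def M_def)
    qed
  qed
qed

lemma generic_power_decomp_step:
  assumes n: "2 \<le> n" and e: "1 \<le> e" "Suc e \<le> D"
    and IHq: "generic_power_decomp n e D" and IHr: "generic_power_decomp (n - 1) (Suc e) D"
  shows "generic_power_decomp n (Suc e) D"
proof -
  define N where "N = rank_bound n e"
  define N' where "N' = rank_bound (n - 1) (Suc e)"
  obtain \<Delta>q Cq Aq where q: "coeff_poly (monoms n e) \<Delta>q" "\<exists>q\<in>forms n e. \<Delta>q q \<noteq> 0"
    "\<And>j. j < N \<Longrightarrow> rational_on (monoms n e) \<Delta>q (\<lambda>q. Cq q j)"
    "\<And>j i. j < N \<Longrightarrow> rational_on (monoms n e) \<Delta>q (\<lambda>q. Aq q j i)"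
    "\<And>q. q \<in> forms n e \<Longrightarrow> \<Delta>q q \<noteq> 0 \<Longrightarrow> power_decomp n e D q (Cq q) (Aq q)"
    using IHq unfolding generic_power_decomp_def N_def by blast
  obtain \<Delta>r Cr Ar where r: "coeff_poly (monoms (n - 1) (Suc e)) \<Delta>r" "\<exists>s\<in>forms (n - 1) (Suc e). \<Delta>r s \<noteq> 0"
    "\<And>k. k < N' \<Longrightarrow> rational_on (monoms (n - 1) (Suc e)) \<Delta>r (\<lambda>s. Cr s k)"
    "\<And>k i. k < N' \<Longrightarrow> rational_on (monoms (n - 1) (Suc e)) \<Delta>r (\<lambda>s. Ar s k i)"
    "\<And>s. s \<in> forms (n - 1) (Suc e) \<Longrightarrow> \<Delta>r s \<noteq> 0 \<Longrightarrow> power_decomp (n - 1) (Suc e) D s (Cr s) (Ar s)"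
    using IHr unfolding generic_power_decomp_def N'_def by blast
  define Q where "Q = dir_deriv n (Suc e) e"
  define R where "R p = residual n e N (Cq (Q p)) (Aq (Q p)) p" for p
  define C where "C p = seq_join N (lift_coeffs n (Suc e) (Cq (Q p)) (Aq (Q p))) (Cr (R p))" for p
  define A where "A p = seq_join N (Aq (Q p)) (\<lambda>k. kernel_lift n (Suc e) (Ar (R p) k))" for p
  from rational_on_step[of n e \<Delta>q N Cq Aq \<Delta>r N' Cr Ar] n q(1,3,4) r(1,3,4)
  obtain \<Delta> where \<Delta>: "coeff_poly (monoms n (Suc e)) \<Delta>"
    "\<And>p. \<Delta> p \<noteq> 0 \<longleftrightarrow> \<Delta>q (Q p) \<noteq> 0 \<and> (\<forall>j<N. lift_factor n (Suc e) (Aq (Q p) j) \<noteq> 0) \<and> \<Delta>r (R p) \<noteq> 0"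
    "\<And>j. j < N + N' \<Longrightarrow> rational_on (monoms n (Suc e)) \<Delta> (\<lambda>p. C p j)"
    "\<And>j i. j < N + N' \<Longrightarrow> rational_on (monoms n (Suc e)) \<Delta> (\<lambda>p. A p j i)"
    unfolding Q_def R_def C_def A_def by auto
  have lift_nz: "\<forall>j<N. lift_factor n (Suc e) (Aq (Q p) j) \<noteq> 0" if "\<Delta>q (Q p) \<noteq> 0" for p
    using power_decomp_lift_factor[OF q(5)[OF _ that] e(2)] by (simp add: Q_def dir_deriv_in_forms N_def)
  have "power_decomp n (Suc e) D p (C p) (A p)" if "\<Delta> p \<noteq> 0" for p
  proof -
    have nz: "\<Delta>q (Q p) \<noteq> 0" "\<Delta>r (R p) \<noteq> 0" using \<Delta>(2) that by auto
    have "power_decomp n e D (Q p) (Cq (Q p)) (Aq (Q p))"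
      by (rule q(5)) (simp_all add: dir_deriv_in_forms nz[unfolded Q_def] Q_def)
    moreover have "power_decomp (n - 1) (Suc e) D (R p) (Cr (R p)) (Ar (R p))"
      by (rule r(5)) (unfold R_def, rule residual_in_forms, fold R_def, rule nz(2))
    ultimately show ?thesis
      using power_decomp_step[OF n e] unfolding C_def A_def Q_def R_def N_def by blast
  qed
  moreover have "\<exists>p\<in>forms n (Suc e). \<Delta> p \<noteq> 0"
  proof -
    obtain q where q0: "q \<in> forms n e" "\<Delta>q q \<noteq> 0" using q(2) by blast
    obtain s where s0: "s \<in> forms (n - 1) (Suc e)" "\<Delta>r s \<noteq> 0" using r(2) by blast
    from power_decomp_step_surj[OF n e(2) q0(1) q(5)[OF q0] s0(1) r(5)[OF s0]]
    obtain p where p: "p \<in> forms n (Suc e)" "dir_deriv n (Suc e) e p = q"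
      "residual n e (rank_bound n e) (Cq q) (Aq q) p = s"
      by blast
    then have "Q p = q" "R p = s" by (simp_all add: Q_def R_def N_def)
    then have "\<Delta> p \<noteq> 0" using \<Delta>(2)[of p] lift_nz[of p] q0(2) s0(2) by simp
    then show ?thesis using p(1) by blast
  qed
  ultimately show ?thesis
    unfolding generic_power_decomp_def rank_bound_Suc[OF n e(1)] N_def[symmetric] N'_def[symmetric]
    using \<Delta>(1,3,4) by (intro exI[of _ \<Delta>] exI[of _ C] exI[of _ A]) auto
qed

lemma generic_power_decomp_one_var: "generic_power_decomp (Suc 0) d D"
proof -
  define \<alpha> where "\<alpha> = (\<lambda>i::nat. if i = 0 then d else 0)"
  have M: "monoms (Suc 0) d = {\<alpha>}" unfolding \<alpha>_def by (rule monoms_one_var)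
  have N: "rank_bound (Suc 0) d = 1" by (simp add: rank_bound_def)
  define A where "A p j i = (if i = 0 then 1 else 0 :: complex)" for p :: coeffs and j i :: nat
  have "power_form (Suc 0) d (A p j) \<alpha> = 1" for p j
    using M by (simp add: power_form_def multinomial_coeff_def A_def \<alpha>_def)
  moreover have "nondegenerate (Suc 0) d D (A p j)" for p j
    by (simp add: nondegenerate_def A_def) (metis of_nat_Suc of_nat_eq_0_iff Zero_not_Suc add.commute)
  ultimately have "power_decomp (Suc 0) d D p (\<lambda>j. p \<alpha>) (A p)" for p
    by (simp add: power_decomp_def power_sum_def M N)
  then show ?thesis
    unfolding generic_power_decomp_def
    by (intro exI[of _ "\<lambda>p. 1"] exI[of _ "\<lambda>p j. p \<alpha>"] exI[of _ A] conjI)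
       (auto simp: M rational_on_const rational_on_coord A_def forms_def coeff_poly.const
         intro!: bexI[of _ "\<lambda>_. 0"])
qed

lemma generic_power_decomp_linear:
  assumes n: "2 \<le> n"
  shows "generic_power_decomp n (Suc 0) D"
proof -
  have N: "rank_bound n (Suc 0) = 1" by (simp add: rank_bound_def)
  have units: "unit_exp 0 \<in> monoms n (Suc 0)" "unit_exp (n - 1) \<in> monoms n (Suc 0)"
    using n monoms_Suc_0 by auto
  have "unit_exp (n - 1) \<noteq> unit_exp 0" using n by (auto simp: unit_exp_def fun_eq_iff)
  define \<Delta> where "\<Delta> p = p (unit_exp 0) * (\<Prod>e\<in>{2..D}. p (unit_exp (n - 1)) + of_nat e * p (unit_exp 0))"
    for p :: coeffs
  define A where "A p j i = (if i < n then p (unit_exp i) else 0)" for p :: coeffs and j i :: nat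
  have "coeff_poly (monoms n (Suc 0)) \<Delta>"
    unfolding \<Delta>_def using units
    by (intro coeff_poly.mult coeff_poly.coord coeff_poly_prod coeff_poly.add coeff_poly.const) auto
  moreover have "(\<lambda>\<alpha>. if \<alpha> = unit_exp 0 then 1 else 0) \<in> forms n (Suc 0)"
    using units by (auto simp: forms_def)
  moreover have "\<Delta> (\<lambda>\<alpha>. if \<alpha> = unit_exp 0 then 1 else 0) \<noteq> 0"
    using \<open>unit_exp (n - 1) \<noteq> unit_exp 0\<close> by (simp add: \<Delta>_def)
  moreover have "rational_on (monoms n (Suc 0)) \<Delta> (\<lambda>p. A p j i)" for j i
    by (cases "i < n") (simp_all add: A_def monoms_Suc_0 rational_on_coord rational_on_const)
  moreover have "power_decomp n (Suc 0) D p (\<lambda>j. 1) (A p)" if "\<Delta> p \<noteq> 0" for p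
  proof -
    have "p \<alpha> = power_form n (Suc 0) (A p 0) \<alpha>" if \<alpha>: "\<alpha> \<in> monoms n (Suc 0)" for \<alpha>
    proof -
      obtain i where i: "i < n" "\<alpha> = unit_exp i" using \<alpha> monoms_Suc_0 by auto
      have "(\<Prod>j<n. A p 0 j ^ unit_exp i j) = (\<Prod>j\<in>{i}. A p 0 j ^ unit_exp i j)"
        by (rule prod.mono_neutral_right) (auto simp: unit_exp_def i)
      moreover have "(\<Prod>j<n. fact (unit_exp i j) :: complex) = 1"
        by (rule prod.neutral) (auto simp: unit_exp_def)
      ultimately show ?thesis
        using i \<alpha> by (simp add: power_form_def multinomial_coeff_def A_def unit_exp_def)
    qed
    moreover have "nondegenerate n (Suc 0) D (A p j)" for j
      using \<open>\<Delta> p \<noteq> 0\<close> n by (auto simp: nondegenerate_def \<Delta>_def A_def prod_zero_iff)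
    ultimately show ?thesis by (simp add: power_decomp_def power_sum_def N A_def)
  qed
  ultimately show ?thesis
    unfolding generic_power_decomp_def N
    by (intro exI[of _ \<Delta>] exI[of _ "\<lambda>p j. 1"] exI[of _ A]) (auto simp: rational_on_const)
qed

lemma generic_power_decomp_all:
  "1 \<le> n \<Longrightarrow> 1 \<le> d \<Longrightarrow> d \<le> D \<Longrightarrow> generic_power_decomp n d D"
proof (induction "n + d" arbitrary: n d rule: less_induct)
  case less
  show ?case
  proof (cases "n = 1")
    case True
    then show ?thesis by (simp add: generic_power_decomp_one_var)
  next
    case False
    then have n: "2 \<le> n" using less.prems by simp
    obtain e where d: "d = Suc e" using less.prems by (cases d) auto
    show ?thesis
    proof (cases "e = 0")
      case True
      then show ?thesis using n d by (simp add: generic_power_decomp_linear)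
    next
      case False
      have "generic_power_decomp n e D" by (rule less.hyps) (use d False less.prems in auto)
      moreover have "generic_power_decomp (n - 1) (Suc e) D"
        by (rule less.hyps) (use d n less.prems in auto)
      moreover have "1 \<le> e" "Suc e \<le> D" using False d less.prems by auto
      ultimately show ?thesis unfolding d using generic_power_decomp_step[OF n] by blast
    qed
  qed
qed

lemma complex_root_exists:
  assumes "0 < d"
  shows "\<exists>z::complex. z ^ d = c"
proof -
  have "rcis (root d (cmod c)) (Arg c / real d) ^ d = rcis (root d (cmod c) ^ d) (real d * (Arg c / real d))"
    by (rule DeMoivre2)
  also have "\<dots> = c" using assms by (simp add: real_root_pow_pos2 rcis_cmod_Arg)
  finally show ?thesis by blast
qed

lemma power_decomp_imp_sum_of_powers:
  assumes "1 \<le> d" "power_decomp n d D p C A"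
  shows "sum_of_powers n d (rank_bound n d) p"
proof -
  have "\<forall>j. \<exists>z. z ^ d = C j" using complex_root_exists assms(1) by simp
  then obtain z where z: "\<And>j. z j ^ d = C j" by metis
  show ?thesis unfolding sum_of_powers_def
  proof (intro exI[of _ "\<lambda>j i. z j * A j i"] allI)
    fix x
    have "eval_form n d p x = eval_form n d (power_sum n d (rank_bound n d) C A) x"
      using assms(2) unfolding eval_form_def power_decomp_def by (auto intro!: sum.cong)
    also have "\<dots> = (\<Sum>j<rank_bound n d. (z j * (\<Sum>i<n. A j i * x i)) ^ d)"
      unfolding eval_power_sum power_mult_distrib z ..
    finally show "eval_form n d p x = (\<Sum>j<rank_bound n d. (\<Sum>i<n. z j * A j i * x i) ^ d)"
      by (simp add: sum_distrib_left mult.assoc)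
  qed
qed

theorem corollary3p10:
  fixes n d :: nat
  assumes "n \<ge> 1" and "d \<ge> 1"
  shows "general_form n d (sum_of_powers n d (((n + d) - 2) choose (d - 1)))"
proof -
  obtain \<Delta> C A where \<Delta>: "coeff_poly (monoms n d) \<Delta>" "\<exists>p\<in>forms n d. \<Delta> p \<noteq> 0"
    and dec: "\<And>p. p \<in> forms n d \<Longrightarrow> \<Delta> p \<noteq> 0 \<Longrightarrow> power_decomp n d d p (C p) (A p)"
    using generic_power_decomp_all[OF assms order_refl] unfolding generic_power_decomp_def by blast
  let ?U = "{p \<in> forms n d. \<exists>f\<in>{\<Delta>}. f p \<noteq> 0}"
  have "zariski_open_forms n d ?U"
    unfolding zariski_open_forms_def using \<Delta>(1) by blast
  moreover have "?U \<noteq> {}" using \<Delta>(2) by auto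
  moreover have "sum_of_powers n d (rank_bound n d) p" if "p \<in> ?U" for p
    using that power_decomp_imp_sum_of_powers[OF assms(2) dec] by auto
  ultimately show ?thesis unfolding general_form_def rank_bound_def by blast
qed

end
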